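(* The estimate of Theorem 4.7 fails for $\epsilon=\frac13$: there is no constant $C>0$ such that for all $f\in L^{4/3}(\mathbb{H},(1-\log|z_2|)^{1/3})$ for which the integral defining $P(f)$ converges absolutely, and all $\lambda>0$, $$\left|\{(z_1,z_2)\in\mathbb{H} : |P(f)(z_1,z_2)|>\lambda\}\right| \le \frac{C\,\|f\|^{4/3}_{L^{4/3}(\mathbb{H},(1-\log|z_2|)^{1/3})}}{\lambda^{4/3}}.$$
   Context: $\mathbb{H}=\{(z_1,z_2)\in\mathbb{C}^2:|z_1|<|z_2|<1\}$, $dV$ Lebesgue measure, $|U|$ Lebesgue measure of $U$. The Bergman projection is $P(f)(z)=\int_{\mathbb{H}}K_{\mathbb{H}}(z;\bar w)f(w)\,dV(w)$, $K_{\mathbb{H}}(z_1,z_2;\bar w_1,\bar w_2)=\frac{1}{\pi^2 z_2\bar w_2(1-\frac{z_1\bar w_1}{z_2\bar w_2})^2(1-z_2\bar w_2)^2}$. For a positive weight $\mu$, $\|f\|^p_{L^p(\mathbb{H},\mu)}=\int_{\mathbb{H}}|f|^p\mu\,dV$. *)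

theory Defs
  imports "HOL-Analysis.Analysis"
begin

definition hartogs :: "(complex \<times> complex) set" where
  "hartogs = {(z1, z2). norm z1 < norm z2 \<and> norm z2 < 1}"

definition bergman_kernel :: "complex \<times> complex \<Rightarrow> complex \<times> complex \<Rightarrow> complex" where
  "bergman_kernel z w =
     1 / (complex_of_real (pi ^ 2) * snd z * cnj (snd w)
          * (1 - (fst z * cnj (fst w)) / (snd z * cnj (snd w))) ^ 2
          * (1 - snd z * cnj (snd w)) ^ 2)"

definition bergman_proj :: "(complex \<times> complex \<Rightarrow> complex) \<Rightarrow> complex \<times> complex \<Rightarrow> complex" where
  "bergman_proj f z = (LINT w:hartogs|lebesgue. bergman_kernel z w * f w)"

definition hweight :: "complex \<times> complex \<Rightarrow> real" where
  "hweight z = (1 - ln (norm (snd z))) powr (1/3)"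

definition wLp_pow :: "real \<Rightarrow> (complex \<times> complex \<Rightarrow> real) \<Rightarrow> (complex \<times> complex \<Rightarrow> complex) \<Rightarrow> ennreal" where
  "wLp_pow p \<mu> f = (\<integral>\<^sup>+ z \<in> hartogs. ennreal (norm (f z) powr p * \<mu> z) \<partial>lebesgue)"

end

theory Submission
  imports Defs "HOL-Real_Asymp.Real_Asymp"
begin

text \<open>Place the disjoint shells \<open>B_n = {|w_1| < r_n, r_n < |w_2| < 2 r_n}\<close>, \<open>r_n = 2^-(n+4)\<close>,
  near the singular point 0 of the Hartogs triangle and put
  \<open>f_J = \<Sum>_{n=1..J} conj(w_2) 1_{B_n} / (n r_n^4)\<close>. On \<open>B_n\<close> one has \<open>|f_J| \<le> 2/(n r_n^3)\<close> and
  \<open>1 - log|w_2| \<le> 6n\<close>, while \<open>|B_n| = 3\<pi>^2 r_n^4\<close>, so each shell contributes \<open>O(1/n)\<close> to the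
  weighted norm: \<open>\<parallel>f_J\<parallel>^(4/3) = O(H_J)\<close> with \<open>H_J\<close> the harmonic number. For \<open>z\<close> in the
  polydisc \<open>U\<close> of radius 1/100 around \<open>(0, 1/2)\<close> and \<open>w\<close> in any shell,
  \<open>K(z, w) conj(w_2)\<close> is close to \<open>1/(\<pi>^2 z_2)\<close> and so has real part at least \<open>4/(9\<pi>^2)\<close>.
  Hence nothing cancels and \<open>|P(f_J)| \<ge> (4/3) H_J\<close> on \<open>U\<close>, so the weak-type estimate at
  height \<open>H_J/2\<close> would force \<open>|U| = O(H_J^(-1/3))\<close>, which tends to 0.\<close>

lemma emeasure_lborel_ball_complex:
  "r \<ge> 0 \<Longrightarrow> emeasure lborel (ball (c::complex) r) = ennreal (pi * r\<^sup>2)"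
  by (simp add: emeasure_ball unit_ball_vol_2)

lemma emeasure_lborel_cball_complex:
  "r \<ge> 0 \<Longrightarrow> emeasure lborel (cball (c::complex) r) = ennreal (pi * r\<^sup>2)"
  by (simp add: emeasure_cball unit_ball_vol_2)

lemma emeasure_lborel_Times_complex:
  "A \<in> sets borel \<Longrightarrow> B \<in> sets borel \<Longrightarrow>
    emeasure lborel (A \<times> B) = emeasure lborel (A::complex set) * emeasure lborel (B::complex set)"
  by (simp add: lborel_prod[symmetric] lborel.emeasure_pair_measure_Times)

lemma emeasure_lborel_annulus_complex:
  assumes "0 \<le> r" "r < s"
  shows "emeasure lborel (ball (c::complex) s - cball c r) = ennreal (pi * (s\<^sup>2 - r\<^sup>2))"
proof -
  have "emeasure lborel (ball c s - cball c r) = emeasure lborel (ball c s) - emeasure lborel (cball c r)"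
    using assms emeasure_lborel_cball_finite[of c r] by (intro emeasure_Diff) auto
  also have "\<dots> = ennreal (pi * (s\<^sup>2 - r\<^sup>2))"
    using assms by (simp add: emeasure_lborel_ball_complex emeasure_lborel_cball_complex
        ennreal_minus[symmetric] power_mono algebra_simps)
  finally show ?thesis .
qed

lemma ennreal_mult_divide_le:
  assumes "W \<le> ennreal B" "0 \<le> C" "0 < T" "0 \<le> B"
  shows "ennreal C * W / ennreal T \<le> ennreal (C * B / T)"
proof -
  have "ennreal C * W / ennreal T \<le> ennreal C * ennreal B / ennreal T"
    using assms(1) by (intro divide_right_mono_ennreal mult_left_mono) auto
  also have "\<dots> = ennreal (C * B) / ennreal T"
    using assms by (simp add: ennreal_mult)
  also have "\<dots> = ennreal (C * B / T)"
    using assms by (simp add: divide_ennreal)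
  finally show ?thesis .
qed

lemma open_hartogs: "open hartogs"
proof -
  have eq: "hartogs = {z. norm (fst z) < norm (snd z) \<and> norm (snd z) < 1}"
    unfolding hartogs_def by auto
  show ?thesis
    unfolding eq by (intro open_Collect_conj open_Collect_less) (auto intro!: continuous_intros)
qed

lemma hartogs_sets [measurable]: "hartogs \<in> sets borel"
  by (simp add: open_hartogs)

lemma borel_measurable_cnj [measurable]: "cnj \<in> borel_measurable borel"
  by (intro borel_measurable_continuous_onI continuous_intros)

lemma borel_measurable_cnj_snd [measurable]:
  "(\<lambda>w::complex \<times> complex. cnj (snd w)) \<in> borel_measurable borel"
  by (intro borel_measurable_continuous_onI continuous_intros)

lemma borel_measurable_bergman_kernel [measurable]:
  "case_prod bergman_kernel \<in> borel_measurable borel"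
  unfolding bergman_kernel_def case_prod_unfold borel_prod[symmetric] by measurable

lemma borel_measurable_bergman_kernel_right [measurable]:
  "(\<lambda>w. bergman_kernel z w) \<in> borel_measurable borel"
proof -
  have "(\<lambda>w. (z, w)) \<in> borel \<rightarrow>\<^sub>M borel"
    by (intro borel_measurable_continuous_onI continuous_intros)
  from measurable_compose[OF this borel_measurable_bergman_kernel] show ?thesis
    by simp
qed

lemma bergman_proj_eq_lborel_integral:
  assumes [measurable]: "f \<in> borel_measurable borel"
  shows "bergman_proj f z = (LINT w|lborel. indicator hartogs w *\<^sub>R (bergman_kernel z w * f w))"
  unfolding bergman_proj_def set_lebesgue_integral_def by (intro integral_completion) measurable

lemma borel_measurable_bergman_proj:
  assumes [measurable]: "f \<in> borel_measurable borel"
  shows "bergman_proj f \<in> borel_measurable lborel"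
proof -
  have "(\<lambda>p. bergman_kernel (fst p) (snd p))
      \<in> borel_measurable (borel :: ((complex \<times> complex) \<times> (complex \<times> complex)) measure)"
    using borel_measurable_bergman_kernel by (simp add: case_prod_unfold)
  moreover have "(\<lambda>p::(complex \<times> complex) \<times> (complex \<times> complex). snd p) \<in> borel \<rightarrow>\<^sub>M borel"
    by (intro borel_measurable_continuous_onI continuous_intros)
  ultimately have "case_prod (\<lambda>z w. indicator hartogs w *\<^sub>R (bergman_kernel z w * f w))
      \<in> borel_measurable (lborel \<Otimes>\<^sub>M lborel)"
    unfolding lborel_prod case_prod_unfold by measurable
  then show ?thesis
    by (simp only: bergman_proj_eq_lborel_integral[OF assms, abs_def])
      (rule lborel.borel_measurable_lebesgue_integral)
qed

section \<open>Estimates for the Bergman kernel\<close>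

lemma bergman_kernel_mult_cnj:
  assumes "snd w \<noteq> 0" "snd z \<noteq> 0"
  shows "bergman_kernel z w * cnj (snd w) =
    1 / (complex_of_real (pi\<^sup>2) * (snd z * (1 - fst z * cnj (fst w) / (snd z * cnj (snd w)))\<^sup>2
      * (1 - snd z * cnj (snd w))\<^sup>2))"
  using assms unfolding bergman_kernel_def by (simp add: field_simps)

lemma norm_bergman_kernel_mult_cnj_le:
  assumes z: "z \<in> hartogs" and w: "w \<in> hartogs"
  shows "norm (bergman_kernel z w * cnj (snd w)) \<le>
    1 / (pi\<^sup>2 * (norm (snd z) * ((1 - norm (fst z) / norm (snd z))\<^sup>2 * (1 - norm (snd z))\<^sup>2)))"
proof -
  from z w have z1: "norm (fst z) < norm (snd z)" and z2: "norm (snd z) < 1"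
    and w1: "norm (fst w) < norm (snd w)" and w2: "norm (snd w) < 1"
    by (auto simp: hartogs_def)
  define \<zeta> where "\<zeta> = fst z * cnj (fst w) / (snd z * cnj (snd w))"
  define v where "v = snd z * cnj (snd w)"
  have "norm \<zeta> = (norm (fst z) / norm (snd z)) * (norm (fst w) / norm (snd w))"
    by (simp add: \<zeta>_def norm_mult norm_divide)
  also have "\<dots> \<le> (norm (fst z) / norm (snd z)) * 1"
    using w1 by (intro mult_left_mono) (auto simp: divide_le_eq_1)
  finally have \<zeta>: "1 - norm (fst z) / norm (snd z) \<le> norm (1 - \<zeta>)"
    using norm_triangle_ineq2[of 1 \<zeta>] by simp
  have v: "1 - norm (snd z) \<le> norm (1 - v)"
    using norm_triangle_ineq2[of 1 v] w2 mult_left_mono[of "norm (snd w)" 1 "norm (snd z)"]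
    by (simp add: v_def norm_mult)
  have "bergman_kernel z w * cnj (snd w) =
      1 / (complex_of_real (pi\<^sup>2) * (snd z * (1 - \<zeta>)\<^sup>2 * (1 - v)\<^sup>2))"
    using bergman_kernel_mult_cnj[of w z] z1 w1 by (force simp: \<zeta>_def v_def)
  then have "norm (bergman_kernel z w * cnj (snd w)) =
      1 / (pi\<^sup>2 * (norm (snd z) * (norm (1 - \<zeta>) ^ 2 * norm (1 - v) ^ 2)))"
    by (simp add: norm_mult norm_divide norm_power)
  also have "\<dots> \<le>
      1 / (pi\<^sup>2 * (norm (snd z) * ((1 - norm (fst z) / norm (snd z))\<^sup>2 * (1 - norm (snd z))\<^sup>2)))"
    using \<zeta> v z1 z2 by (intro divide_left_mono mult_left_mono mult_mono power_mono mult_pos_pos)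
      (auto simp: divide_less_eq_1 le_divide_eq_1 less_imp_le)
  finally show ?thesis .
qed

lemma Re_inverse_ge:
  fixes u :: complex
  assumes "norm (u - 1/2) \<le> 1/4"
  shows "4/9 \<le> Re (1/u)"
proof -
  have "1/4 \<le> Re u"
    using abs_Re_le_cmod[of "u - 1/2"] assms by simp
  moreover have "(Re u)\<^sup>2 + (Im u)\<^sup>2 \<le> 9/16"
  proof -
    have "norm u \<le> 3/4"
      using norm_triangle_ineq[of "u - 1/2" "1/2"] assms by simp
    then have "(norm u)\<^sup>2 \<le> (3/4)\<^sup>2"
      by (intro power_mono) auto
    then show ?thesis
      by (simp add: cmod_power2 power_divide)
  qed
  ultimately have "(1/4) / (9/16) \<le> Re u / ((Re u)\<^sup>2 + (Im u)\<^sup>2)"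
    by (intro frac_le) (auto intro: add_pos_nonneg)
  then show ?thesis
    by (simp add: Re_divide power2_eq_square)
qed

lemma norm_perturbed_product_sub_half_le:
  fixes a \<zeta> v :: complex
  assumes "norm \<zeta> \<le> 1/49" "norm v \<le> 1/15" "norm (a - 1/2) \<le> 1/100"
  shows "norm (a * (1 - \<zeta>)\<^sup>2 * (1 - v)\<^sup>2 - 1/2) \<le> 1/4"
proof -
  define p where "p = (1 - \<zeta>) * (1 - v)"
  have "p - 1 = - \<zeta> - v + \<zeta> * v"
    by (simp add: p_def algebra_simps)
  then have "norm (p - 1) \<le> norm \<zeta> + norm v + norm \<zeta> * norm v"
    by (metis add_mono norm_minus_cancel norm_mult norm_triangle_ineq4 norm_triangle_le order_refl)
  also have "\<dots> \<le> 1/49 + 1/15 + 1/49 * (1/15)"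
    using assms by (intro add_mono mult_mono) auto
  finally have p1: "norm (p - 1) \<le> 1/10"
    by simp
  have "norm (p\<^sup>2 - 1) = norm (p - 1) * norm ((p - 1) + 2)"
    by (simp add: power2_eq_square algebra_simps norm_mult[symmetric])
  also have "\<dots> \<le> 1/10 * (21/10)"
    using p1 norm_triangle_ineq[of "p - 1" 2] by (intro mult_mono) auto
  finally have p2: "norm (p\<^sup>2 - 1) \<le> 21/100"
    by simp
  have a: "norm a \<le> 51/100"
    using norm_triangle_ineq[of "a - 1/2" "1/2"] assms(3) by simp
  have "norm (a * (1 - \<zeta>)\<^sup>2 * (1 - v)\<^sup>2 - 1/2) = norm ((a - 1/2) + a * (p\<^sup>2 - 1))"
    by (simp add: p_def power2_eq_square algebra_simps)
  also have "\<dots> \<le> norm (a - 1/2) + norm a * norm (p\<^sup>2 - 1)"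
    by (metis norm_mult norm_triangle_ineq)
  also have "\<dots> \<le> 1/100 + 51/100 * (21/100)"
    using assms(3) a p2 by (intro add_mono mult_mono) auto
  finally show ?thesis
    by simp
qed

section \<open>The test functions\<close>

definition shell_radius :: "nat \<Rightarrow> real" where
  "shell_radius n = 1 / 2 ^ (n + 4)"

definition shell :: "nat \<Rightarrow> (complex \<times> complex) set" where
  "shell n = ball 0 (shell_radius n) \<times> (ball 0 (2 * shell_radius n) - cball 0 (shell_radius n))"

definition shell_coeff :: "nat \<Rightarrow> real" where
  "shell_coeff n = 1 / (real n * shell_radius n ^ 4)"

definition test_fun :: "nat \<Rightarrow> complex \<times> complex \<Rightarrow> complex" where
  "test_fun J w =
    (\<Sum>n\<in>{1..J}. indicator (shell n) w *\<^sub>R (complex_of_real (shell_coeff n) * cnj (snd w)))"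

definition probe_set :: "(complex \<times> complex) set" where
  "probe_set = ball 0 (1/100) \<times> ball (1/2) (1/100)"

lemma shell_radius_pos: "0 < shell_radius n"
  by (simp add: shell_radius_def)

lemma shell_radius_le: "shell_radius n \<le> 1/16"
  using power_increasing[of 4 "n + 4" "2::real"] by (simp add: shell_radius_def field_simps)

lemma double_shell_radius_le:
  assumes "m < n"
  shows "2 * shell_radius n \<le> shell_radius m"
proof -
  have "(2::real) * 2 ^ (m + 4) = 2 ^ (m + 5)"
    by (simp add: power_add)
  also have "\<dots> \<le> 2 ^ (n + 4)"
    using assms by (intro power_increasing) auto
  finally show ?thesis
    by (simp add: shell_radius_def field_simps)
qed

lemma ln_shell_radius_ge: "- real (n + 4) \<le> ln (shell_radius n)"
proof -
  have "ln (2::real) \<le> 1"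
    using ln_le_minus_one[of 2] by simp
  then have "real (n + 4) * ln 2 \<le> real (n + 4)"
    by (intro mult_left_le) auto
  moreover have "ln (shell_radius n) = - (real (n + 4) * ln 2)"
    by (simp add: shell_radius_def ln_div ln_realpow)
  ultimately show ?thesis
    by linarith
qed

lemma shell_coeff_pos: "n \<ge> 1 \<Longrightarrow> 0 < shell_coeff n"
  using shell_radius_pos[of n] by (simp add: shell_coeff_def)

lemma mem_shell_iff:
  "w \<in> shell n \<longleftrightarrow>
    norm (fst w) < shell_radius n \<and> shell_radius n < norm (snd w) \<and> norm (snd w) < 2 * shell_radius n"
  unfolding shell_def by (cases w) auto

lemma shell_subset_hartogs: "shell n \<subseteq> hartogs"
  using shell_radius_le[of n] by (auto simp: mem_shell_iff hartogs_def)

lemma shell_sets [measurable]: "shell n \<in> sets borel"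
  unfolding shell_def by (simp add: borel_prod[symmetric])

lemma shell_unique: "w \<in> shell n \<Longrightarrow> w \<in> shell m \<Longrightarrow> m = n"
  using double_shell_radius_le[of m n] double_shell_radius_le[of n m]
  by (cases m n rule: linorder_cases) (auto simp: mem_shell_iff)

lemma emeasure_shell: "emeasure lborel (shell n) = ennreal (3 * pi\<^sup>2 * shell_radius n ^ 4)"
proof -
  have "emeasure lborel (shell n) =
      ennreal (pi * (shell_radius n)\<^sup>2) * ennreal (pi * ((2 * shell_radius n)\<^sup>2 - (shell_radius n)\<^sup>2))"
    using shell_radius_pos[of n] unfolding shell_def
    by (subst emeasure_lborel_Times_complex)
      (auto simp: emeasure_lborel_ball_complex emeasure_lborel_annulus_complex)
  also have "\<dots> = ennreal (3 * pi\<^sup>2 * shell_radius n ^ 4)"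
    using shell_radius_pos[of n]
    by (subst ennreal_mult[symmetric]) (auto simp: power2_eq_square power4_eq_xxxx algebra_simps)
  finally show ?thesis .
qed

lemma measure_shell: "measure lborel (shell n) = 3 * pi\<^sup>2 * shell_radius n ^ 4"
  by (simp add: measure_def emeasure_shell)

lemma test_fun_on_shell:
  "n \<in> {1..J} \<Longrightarrow> w \<in> shell n \<Longrightarrow> test_fun J w = complex_of_real (shell_coeff n) * cnj (snd w)"
  unfolding test_fun_def
  by (subst sum.remove[of _ n]) (auto intro!: sum.neutral simp: indicator_def dest: shell_unique)

lemma test_fun_off_shells: "(\<And>n. n \<in> {1..J} \<Longrightarrow> w \<notin> shell n) \<Longrightarrow> test_fun J w = 0"
  unfolding test_fun_def by (auto intro!: sum.neutral)

lemma borel_measurable_test_fun [measurable]: "test_fun J \<in> borel_measurable borel"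
  unfolding test_fun_def by measurable

lemma probe_set_iff: "z \<in> probe_set \<longleftrightarrow> norm (fst z) < 1/100 \<and> norm (snd z - 1/2) < 1/100"
  by (cases z) (auto simp: probe_set_def dist_norm norm_minus_commute)

lemma norm_snd_probe_set:
  assumes "z \<in> probe_set"
  shows "49/100 \<le> norm (snd z)" "norm (snd z) \<le> 51/100"
  using assms norm_triangle_ineq2[of "1/2" "snd z"] norm_triangle_ineq[of "snd z - 1/2" "1/2"]
  by (auto simp: probe_set_iff norm_minus_commute)

lemma probe_set_subset_hartogs: "probe_set \<subseteq> hartogs"
  using norm_snd_probe_set by (fastforce simp: probe_set_iff hartogs_def)

lemma emeasure_probe_set: "emeasure lebesgue probe_set = ennreal (pi\<^sup>2 / 10^8)"
proof -
  have "emeasure lborel probe_set = ennreal (pi * (1/100)\<^sup>2) * ennreal (pi * (1/100)\<^sup>2)"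
    unfolding probe_set_def
    by (subst emeasure_lborel_Times_complex) (auto simp: emeasure_lborel_ball_complex)
  also have "\<dots> = ennreal (pi\<^sup>2 / 10^8)"
    by (subst ennreal_mult[symmetric]) (auto simp: power2_eq_square)
  finally show ?thesis
    by (subst emeasure_completion) (auto simp: probe_set_def open_Times)
qed

section \<open>The weighted norm of the test functions\<close>

lemma one_sub_ln_norm_snd_on_shell:
  assumes n: "n \<ge> 1" and w: "w \<in> shell n"
  shows "1 \<le> 1 - ln (norm (snd w))" and "1 - ln (norm (snd w)) \<le> 6 * real n"
proof -
  from w have w2: "shell_radius n < norm (snd w)" "norm (snd w) < 2 * shell_radius n"
    by (auto simp: mem_shell_iff)
  then have "ln (norm (snd w)) \<le> 0"
    using shell_radius_pos[of n] shell_radius_le[of n] by (intro ln_le_zero_iff[THEN iffD2]) auto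
  then show "1 \<le> 1 - ln (norm (snd w))"
    by simp
  show "1 - ln (norm (snd w)) \<le> 6 * real n"
    using ln_mono[of "shell_radius n" "norm (snd w)"] ln_shell_radius_ge[of n] w2
      shell_radius_pos[of n] n
    by simp
qed

lemma weighted_test_fun_on_shell_le:
  assumes n: "n \<ge> 1" and w: "w \<in> shell n"
  shows "norm (complex_of_real (shell_coeff n) * cnj (snd w)) powr (4/3) * hweight w
    \<le> 6 / (real n * shell_radius n ^ 4)"
proof -
  define \<rho> where "\<rho> = shell_radius n"
  define x where "x = shell_coeff n * norm (snd w)"
  define L where "L = 1 - ln (norm (snd w))"
  have \<rho>: "0 < \<rho>" "\<rho> \<le> 1/16"
    using shell_radius_pos shell_radius_le by (auto simp: \<rho>_def)
  from w have w2: "\<rho> < norm (snd w)" "norm (snd w) < 2 * \<rho>"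
    by (auto simp: mem_shell_iff \<rho>_def)
  have x0: "0 \<le> x"
    using shell_coeff_pos[OF n] by (simp add: x_def)
  have x: "x \<le> 2 / (real n * \<rho> ^ 3)"
  proof -
    have "x \<le> shell_coeff n * (2 * \<rho>)"
      unfolding x_def using shell_coeff_pos[OF n] w2 by (intro mult_left_mono) auto
    also have "\<dots> = 2 / (real n * \<rho> ^ 3)"
      using \<rho> n by (simp add: shell_coeff_def \<rho>_def field_simps power4_eq_xxxx power3_eq_cube)
    finally show ?thesis .
  qed
  have L1: "1 \<le> L" and L2: "L \<le> 6 * real n"
    using one_sub_ln_norm_snd_on_shell[OF n w] by (simp_all add: L_def)
  have "x * L \<le> 2 / (real n * \<rho> ^ 3) * (6 * real n)"
    using x L2 x0 L1 \<rho> by (intro mult_mono) auto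
  also have "\<dots> = 12 / \<rho> ^ 3"
    using n by (simp add: field_simps)
  also have "\<dots> \<le> (3 / \<rho>) ^ 3"
    using \<rho> by (simp add: power_divide divide_right_mono)
  finally have "x * L \<le> (3 / \<rho>) ^ 3" .
  moreover have "0 \<le> x * L"
    using x0 L1 by simp
  ultimately have "(x * L) powr (1/3) \<le> ((3 / \<rho>) ^ 3) powr (1/3)"
    by (intro powr_mono2) simp_all
  also have "\<dots> = 3 / \<rho>"
    using root_powr_inverse[of 3 "(3 / \<rho>) ^ 3"] real_root_power_cancel[of 3 "3 / \<rho>"] \<rho>
    by simp
  finally have xL: "(x * L) powr (1/3) \<le> 3 / \<rho>" .
  have "norm (complex_of_real (shell_coeff n) * cnj (snd w)) powr (4/3) * hweight w
      = x powr (1 + 1/3) * L powr (1/3)"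
    using shell_coeff_pos[OF n] by (simp add: x_def L_def hweight_def norm_mult)
  also have "\<dots> = x * (x * L) powr (1/3)"
  proof (cases "x = 0")
    case False
    then have "x powr (1 + 1/3) = x * x powr (1/3)"
      using x0 by (subst powr_add) simp
    then show ?thesis
      using x0 L1 by (simp add: powr_mult)
  qed simp
  also have "\<dots> \<le> 2 / (real n * \<rho> ^ 3) * (3 / \<rho>)"
    using x xL x0 \<rho> n by (intro mult_mono) auto
  also have "\<dots> = 6 / (real n * shell_radius n ^ 4)"
    using \<rho> n by (simp add: \<rho>_def field_simps power4_eq_xxxx power3_eq_cube)
  finally show ?thesis .
qed

lemma weighted_test_fun_le_sum:
  "ennreal (norm (test_fun J z) powr (4/3) * hweight z) * indicator hartogs z
    \<le> (\<Sum>n\<in>{1..J}. ennreal (6 / (real n * shell_radius n ^ 4)) * indicator (shell n) z)"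
proof (cases "\<exists>m\<in>{1..J}. z \<in> shell m")
  case True
  let ?b = "\<lambda>n. ennreal (6 / (real n * shell_radius n ^ 4))"
  from True obtain m where m: "m \<in> {1..J}" "z \<in> shell m"
    by blast
  have "ennreal (norm (test_fun J z) powr (4/3) * hweight z) * indicator hartogs z
      \<le> ennreal (norm (test_fun J z) powr (4/3) * hweight z)"
    by (simp add: indicator_def)
  also have "\<dots> \<le> ?b m"
    using weighted_test_fun_on_shell_le[of m z] m test_fun_on_shell[OF m]
    by (intro ennreal_leI) auto
  also have "\<dots> = ?b m * indicator (shell m) z"
    using m by simp
  also have "\<dots> \<le> (\<Sum>n\<in>{1..J}. ?b n * indicator (shell n) z)"
    by (rule member_le_sum[where f = "\<lambda>n. ?b n * indicator (shell n) z"]) (use m in auto)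
  finally show ?thesis .
next
  case False
  then have "test_fun J z = 0"
    by (intro test_fun_off_shells) auto
  then show ?thesis
    by simp
qed

lemma weighted_norm_test_fun_le: "wLp_pow (4/3) hweight (test_fun J) \<le> ennreal (18 * pi\<^sup>2 * harm J)"
proof -
  let ?b = "\<lambda>n. ennreal (6 / (real n * shell_radius n ^ 4))"
  have "wLp_pow (4/3) hweight (test_fun J) =
      (\<integral>\<^sup>+ z. ennreal (norm (test_fun J z) powr (4/3) * hweight z) * indicator hartogs z \<partial>lborel)"
    unfolding wLp_pow_def by (simp add: nn_integral_completion)
  also have "\<dots> \<le> (\<integral>\<^sup>+ z. (\<Sum>n\<in>{1..J}. ?b n * indicator (shell n) z) \<partial>lborel)"
    by (intro nn_integral_mono weighted_test_fun_le_sum)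
  also have "\<dots> = (\<Sum>n\<in>{1..J}. ?b n * emeasure lborel (shell n))"
    by (subst nn_integral_sum) (auto simp: nn_integral_cmult_indicator)
  also have "\<dots> = (\<Sum>n\<in>{1..J}. ennreal (18 * pi\<^sup>2 * inverse (real n)))"
  proof (rule sum.cong[OF refl])
    fix n assume "n \<in> {1..J}"
    then show "?b n * emeasure lborel (shell n) = ennreal (18 * pi\<^sup>2 * inverse (real n))"
      using shell_radius_pos[of n] unfolding emeasure_shell
      by (subst ennreal_mult[symmetric]) (auto simp: field_simps)
  qed
  also have "\<dots> = ennreal (18 * pi\<^sup>2 * harm J)"
    by (subst sum_ennreal) (auto simp: harm_def sum_distrib_left)
  finally show ?thesis .
qed

section \<open>The projection of the test functions near \<open>(0, 1/2)\<close>\<close>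

lemma Re_bergman_kernel_mult_cnj_ge:
  assumes z: "z \<in> probe_set" and w: "w \<in> shell n"
  shows "4 / (9 * pi\<^sup>2) \<le> Re (bergman_kernel z w * cnj (snd w))"
proof -
  define \<rho> where "\<rho> = shell_radius n"
  have \<rho>: "0 < \<rho>" "\<rho> \<le> 1/16"
    using shell_radius_pos shell_radius_le by (auto simp: \<rho>_def)
  from w have w1: "norm (fst w) < \<rho>" and w2: "\<rho> < norm (snd w)" "norm (snd w) < 2 * \<rho>"
    by (auto simp: mem_shell_iff \<rho>_def)
  from z have z1: "norm (fst z) < 1/100" and z2: "norm (snd z - 1/2) < 1/100"
    by (auto simp: probe_set_iff)
  note nz = norm_snd_probe_set[OF z]
  have sw: "snd w \<noteq> 0" and sz: "snd z \<noteq> 0"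
    using w2 \<rho> nz by auto
  define \<zeta> where "\<zeta> = fst z * cnj (fst w) / (snd z * cnj (snd w))"
  define v where "v = snd z * cnj (snd w)"
  have "norm \<zeta> = norm (fst z) * norm (fst w) / (norm (snd z) * norm (snd w))"
    by (simp add: \<zeta>_def norm_mult norm_divide)
  also have "\<dots> \<le> (1/100) * norm (snd w) / ((49/100) * norm (snd w))"
    using z1 w1 w2 nz \<rho> by (intro frac_le mult_mono mult_pos_pos) auto
  also have "\<dots> = 1/49"
    using sw by simp
  finally have \<zeta>: "norm \<zeta> \<le> 1/49" .
  have "norm v \<le> (51/100) * (1/8)"
    unfolding v_def norm_mult using nz w2 \<rho> by (intro mult_mono) auto
  then have v: "norm v \<le> 1/15"
    by simp
  define u where "u = snd z * (1 - \<zeta>)\<^sup>2 * (1 - v)\<^sup>2"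
  have "bergman_kernel z w * cnj (snd w) = (1 / u) / complex_of_real (pi\<^sup>2)"
    using bergman_kernel_mult_cnj[OF sw sz] by (simp add: u_def \<zeta>_def v_def)
  then have "Re (bergman_kernel z w * cnj (snd w)) = Re (1/u) / pi\<^sup>2"
    by (simp only: Re_divide_of_real)
  moreover have "4/9 \<le> Re (1/u)"
    unfolding u_def using \<zeta> v z2 by (intro Re_inverse_ge norm_perturbed_product_sub_half_le) auto
  then have "(4/9) / pi\<^sup>2 \<le> Re (1/u) / pi\<^sup>2"
    by (rule divide_right_mono) simp
  ultimately show ?thesis
    by simp
qed

lemma hartogs_integrand_test_fun_eq:
  "indicator hartogs w *\<^sub>R (bergman_kernel z w * test_fun J w) =
    (\<Sum>n\<in>{1..J}. indicator (shell n) w *\<^sub>R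
      (complex_of_real (shell_coeff n) * (bergman_kernel z w * cnj (snd w))))"
proof (cases "w \<in> hartogs")
  case False
  then have "w \<notin> shell n" for n
    using shell_subset_hartogs by blast
  with False show ?thesis
    by simp
qed (simp add: test_fun_def sum_distrib_left algebra_simps)

lemma integrable_shell_term:
  assumes z: "z \<in> hartogs"
  shows "integrable lborel (\<lambda>w. indicator (shell n) w *\<^sub>R
    (complex_of_real (shell_coeff n) * (bergman_kernel z w * cnj (snd w))))"
proof (rule integrableI_bounded_set_indicator)
  show "(\<lambda>w. complex_of_real (shell_coeff n) * (bergman_kernel z w * cnj (snd w)))
      \<in> borel_measurable lborel"
    by measurable
  show "AE w in lborel. w \<in> shell n \<longrightarrow>
      norm (complex_of_real (shell_coeff n) * (bergman_kernel z w * cnj (snd w))) \<le>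
      \<bar>shell_coeff n\<bar> *
        (1 / (pi\<^sup>2 * (norm (snd z) * ((1 - norm (fst z) / norm (snd z))\<^sup>2 * (1 - norm (snd z))\<^sup>2))))"
  proof (intro AE_I2 impI)
    fix w assume "w \<in> shell n"
    then have "norm (bergman_kernel z w * cnj (snd w)) \<le>
        1 / (pi\<^sup>2 * (norm (snd z) * ((1 - norm (fst z) / norm (snd z))\<^sup>2 * (1 - norm (snd z))\<^sup>2)))"
      using norm_bergman_kernel_mult_cnj_le[OF z] shell_subset_hartogs by blast
    then show "norm (complex_of_real (shell_coeff n) * (bergman_kernel z w * cnj (snd w))) \<le>
        \<bar>shell_coeff n\<bar> *
          (1 / (pi\<^sup>2 * (norm (snd z) * ((1 - norm (fst z) / norm (snd z))\<^sup>2 * (1 - norm (snd z))\<^sup>2))))"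
      unfolding norm_mult norm_of_real by (rule mult_left_mono) simp
  qed
qed (auto simp: emeasure_shell)

lemma set_integrable_bergman_kernel_test_fun:
  assumes "z \<in> hartogs"
  shows "set_integrable lebesgue hartogs (\<lambda>w. bergman_kernel z w * test_fun J w)"
  unfolding set_integrable_def
proof (subst integrable_completion)
  show "(\<lambda>w. indicator hartogs w *\<^sub>R (bergman_kernel z w * test_fun J w)) \<in> borel_measurable lborel"
    by measurable
  show "integrable lborel (\<lambda>w. indicator hartogs w *\<^sub>R (bergman_kernel z w * test_fun J w))"
    unfolding hartogs_integrand_test_fun_eq using integrable_shell_term[OF assms]
    by (intro Bochner_Integration.integrable_sum) auto
qed

lemma Re_bergman_proj_test_fun_ge:
  assumes z: "z \<in> probe_set"
  shows "4/3 * harm J \<le> Re (bergman_proj (test_fun J) z)"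
proof -
  let ?g = "\<lambda>n w. indicator (shell n) w *\<^sub>R
    (complex_of_real (shell_coeff n) * (bergman_kernel z w * cnj (snd w)))"
  let ?c = "\<lambda>n. shell_coeff n * (4 / (9 * pi\<^sup>2))"
  have int: "integrable lborel (?g n)" for n
    using integrable_shell_term probe_set_subset_hartogs z by blast
  have "4/3 * harm J = (\<Sum>n\<in>{1..J}. 4/3 * inverse (real n))"
    by (simp add: harm_def sum_distrib_left)
  also have "\<dots> = (\<Sum>n\<in>{1..J}. measure lborel (shell n) * ?c n)"
  proof (rule sum.cong[OF refl])
    fix n assume "n \<in> {1..J}"
    then show "4/3 * inverse (real n) = measure lborel (shell n) * ?c n"
      using shell_radius_pos[of n] unfolding measure_shell shell_coeff_def by (simp add: field_simps)
  qed
  also have "\<dots> = (\<Sum>n\<in>{1..J}. LINT w|lborel. indicator (shell n) w * ?c n)"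
    by simp
  also have "\<dots> \<le> (\<Sum>n\<in>{1..J}. LINT w|lborel. Re (?g n w))"
  proof (intro sum_mono integral_mono)
    fix n w assume n: "n \<in> {1..J}"
    show "indicator (shell n) w * ?c n \<le> Re (?g n w)"
    proof (cases "w \<in> shell n")
      case True
      have "?c n \<le> shell_coeff n * Re (bergman_kernel z w * cnj (snd w))"
        using shell_coeff_pos[of n] n Re_bergman_kernel_mult_cnj_ge[OF z True]
        by (intro mult_left_mono) auto
      then show ?thesis
        using True by simp
    qed simp
  next
    fix n
    show "integrable lborel (\<lambda>w. indicator (shell n) w * ?c n)"
      by (intro integrable_mult_left integrable_real_indicator) (auto simp: emeasure_shell)
    show "integrable lborel (\<lambda>w. Re (?g n w))"
      using int by (rule integrable_Re)
  qed
  also have "\<dots> = Re (LINT w|lborel. (\<Sum>n\<in>{1..J}. ?g n w))"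
    by (simp only: Bochner_Integration.integral_sum[OF int] integral_Re[OF int] Re_sum)
  also have "\<dots> = Re (bergman_proj (test_fun J) z)"
    by (simp add: bergman_proj_eq_lborel_integral hartogs_integrand_test_fun_eq)
  finally show ?thesis .
qed

lemma probe_set_subset_level_set:
  assumes "J \<ge> 1"
  shows "probe_set \<subseteq> {z \<in> hartogs. harm J / 2 < norm (bergman_proj (test_fun J) z)}"
proof
  fix z assume z: "z \<in> probe_set"
  have "(harm J :: real) / 2 < 4/3 * harm J"
    using assms by simp
  also have "\<dots> \<le> norm (bergman_proj (test_fun J) z)"
    using Re_bergman_proj_test_fun_ge[OF z] complex_Re_le_cmod order_trans by blast
  finally show "z \<in> {z \<in> hartogs. harm J / 2 < norm (bergman_proj (test_fun J) z)}"
    using z probe_set_subset_hartogs by auto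
qed

lemma sets_level_set_test_fun:
  "{z \<in> hartogs. t < norm (bergman_proj (test_fun J) z)} \<in> sets lebesgue"
proof -
  have "bergman_proj (test_fun J) \<in> borel_measurable lborel"
    by (intro borel_measurable_bergman_proj borel_measurable_test_fun)
  then have "{z \<in> hartogs. t < norm (bergman_proj (test_fun J) z)} \<in> sets lborel"
    by measurable
  then show ?thesis
    by simp
qed

section \<open>Failure of the weak-type estimate\<close>

lemma set_borel_measurable_test_fun: "set_borel_measurable lebesgue hartogs (test_fun J)"
  unfolding set_borel_measurable_def by (intro measurable_completion) measurable

lemma weighted_norm_test_fun_finite: "wLp_pow (4/3) hweight (test_fun J) < \<infinity>"
  using weighted_norm_test_fun_le[of J] by (simp add: le_less_trans)

lemma test_fun_violates_weak_type:
  fixes C :: real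
  assumes "0 < C"
  obtains J t where "0 < t"
    and "ennreal C * wLp_pow (4/3) hweight (test_fun J) / ennreal (t powr (4/3))
      < emeasure lebesgue {z \<in> hartogs. t < norm (bergman_proj (test_fun J) z)}"
proof -
  define bound where "bound x = C * (18 * pi\<^sup>2 * x) / (x / 2) powr (4/3)" for x :: real
  have "(bound \<longlongrightarrow> 0) at_top"
    unfolding bound_def by real_asymp
  then have "((\<lambda>J. bound (harm J)) \<longlongrightarrow> 0) sequentially"
    using harm_at_top by (rule filterlim_compose)
  then have "eventually (\<lambda>J. bound (harm J) < pi\<^sup>2 / 10^8) sequentially"
    by (rule order_tendstoD) simp
  then obtain N where N: "\<And>J. J \<ge> N \<Longrightarrow> bound (harm J) < pi\<^sup>2 / 10^8"
    unfolding eventually_sequentially by blast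
  define J where "J = max N 1"
  have J: "bound (harm J) < pi\<^sup>2 / 10^8" "J \<ge> 1"
    using N[of J] by (auto simp: J_def)
  have harm_J: "0 < (harm J :: real)"
    using J(2) by (intro harm_pos) simp
  have "ennreal C * wLp_pow (4/3) hweight (test_fun J) / ennreal ((harm J / 2) powr (4/3))
      \<le> ennreal (bound (harm J))"
    unfolding bound_def using weighted_norm_test_fun_le[of J] assms harm_J
    by (intro ennreal_mult_divide_le) (auto simp del: harm_pos_iff)
  also have "\<dots> < ennreal (pi\<^sup>2 / 10^8)"
    using J(1) by (intro ennreal_lessI) auto
  also have "\<dots> \<le> emeasure lebesgue {z \<in> hartogs. harm J / 2 < norm (bergman_proj (test_fun J) z)}"
    unfolding emeasure_probe_set[symmetric]
    using probe_set_subset_level_set[OF J(2)] sets_level_set_test_fun by (rule emeasure_mono)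
  finally show ?thesis
    using harm_J by (intro that[of "harm J / 2"]) auto
qed

lemma weak_type_estimate_counterexample:
  fixes C :: real
  assumes "0 < C"
  shows "\<exists>f. set_borel_measurable lebesgue hartogs f \<and> wLp_pow (4/3) hweight f < \<infinity> \<and>
    (\<forall>z\<in>hartogs. set_integrable lebesgue hartogs (\<lambda>w. bergman_kernel z w * f w)) \<and>
    (\<exists>t>0. \<not> emeasure lebesgue {z \<in> hartogs. t < norm (bergman_proj f z)}
      \<le> ennreal C * wLp_pow (4/3) hweight f / ennreal (t powr (4/3)))"
proof -
  obtain J t where "0 < t" and "ennreal C * wLp_pow (4/3) hweight (test_fun J) / ennreal (t powr (4/3))
      < emeasure lebesgue {z \<in> hartogs. t < norm (bergman_proj (test_fun J) z)}"
    using test_fun_violates_weak_type[OF assms] .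
  then show ?thesis
    using set_borel_measurable_test_fun weighted_norm_test_fun_finite
      set_integrable_bergman_kernel_test_fun
    by (intro exI[of _ "test_fun J"]) (auto simp: not_le)
qed

theorem mainTheorem11:
  shows "\<not> (\<exists>C::real. C > 0 \<and>
    (\<forall>f :: complex \<times> complex \<Rightarrow> complex.
       set_borel_measurable lebesgue hartogs f \<longrightarrow>
       wLp_pow (4/3) hweight f < \<infinity> \<longrightarrow>
       (\<forall>z\<in>hartogs. set_integrable lebesgue hartogs (\<lambda>w. bergman_kernel z w * f w)) \<longrightarrow>
       (\<forall>t::real. t > 0 \<longrightarrow>
          emeasure lebesgue {z \<in> hartogs. norm (bergman_proj f z) > t}
            \<le> ennreal C * wLp_pow (4/3) hweight f / ennreal (t powr (4/3)))))"
  using weak_type_estimate_counterexample by blast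

end
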